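(* Let $M=\{(w,\mathbf{f}(w)):w\in\mathbb{D}\}$ be a minimal graph over the unit disc $\mathbb{D}\subset\mathbb{C}$ with $\mathbf{f}(0)=0$, and let $x=(x_1,x_2,x_3):\mathbb{D}\to M$ be a conformal harmonic parametrization with $x(0)=(0,0,0)$ such that $f=x_1+ix_2:\mathbb{D}\to\mathbb{D}$ is an orientation-preserving harmonic diffeomorphism, $f(0)=0$. Write $f=h+\overline{g}$ with $h,g$ holomorphic, $p=h'=f_z$, and let $q:\mathbb{D}\to\mathbb{D}$ be holomorphic with $q^2=g'/h'$. Assume the Gaussian curvature $\mathcal{K}$ of $M$ vanishes at $O=(0,0,0)$ (equivalently $q'(0)=0$). Then the limit $$\mathcal{K}''(O):=\lim_{w\to 0}\frac{\mathcal{K}(w)}{|w|^2+\langle\nabla\mathbf{f}(0),w\rangle^2}$$ exists and $$|\mathcal{K}''(O)|=\frac{4|q''(0)|^2}{|p(0)|^4\,(1+|q(0)|^2)^6}.$$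
   Context: $\mathcal{K}(w)$ denotes the Gaussian curvature of $M$ at $(w,\mathbf{f}(w))$, namely $\dfrac{\mathbf{f}_{uu}\mathbf{f}_{vv}-\mathbf{f}_{uv}^2}{(1+\mathbf{f}_u^2+\mathbf{f}_v^2)^2}$ with $w=u+iv$. In these Enneper–Weierstrass parameters, $\mathcal{K}(f(z))=-\dfrac{4|q'(z)|^2}{|p(z)|^2(1+|q(z)|^2)^4}$. $\langle\cdot,\cdot\rangle$ is the Euclidean inner product on $\mathbb{R}^2\cong\mathbb{C}$. *)

theory Defs
  imports "HOL-Complex_Analysis.Complex_Analysis"
begin

definition pdu :: "(complex \<Rightarrow> real) \<Rightarrow> complex \<Rightarrow> real" where
  "pdu F w = deriv (\<lambda>t::real. F (w + complex_of_real t)) 0"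

definition pdv :: "(complex \<Rightarrow> real) \<Rightarrow> complex \<Rightarrow> real" where
  "pdv F w = deriv (\<lambda>t::real. F (w + \<i> * complex_of_real t)) 0"

definition C2_on :: "(complex \<Rightarrow> real) \<Rightarrow> complex set \<Rightarrow> bool" where
  "C2_on F S \<longleftrightarrow> open S \<and>
     (\<forall>w\<in>S. F differentiable (at w) \<and> pdu F differentiable (at w) \<and> pdv F differentiable (at w)) \<and>
     continuous_on S (pdu (pdu F)) \<and> continuous_on S (pdv (pdu F)) \<and>
     continuous_on S (pdu (pdv F)) \<and> continuous_on S (pdv (pdv F))"

definition minimal_graph_on :: "(complex \<Rightarrow> real) \<Rightarrow> complex set \<Rightarrow> bool" where
  "minimal_graph_on F S \<longleftrightarrow> C2_on F S \<and>
     (\<forall>w\<in>S. (1 + (pdv F w)\<^sup>2) * pdu (pdu F) w - 2 * pdu F w * pdv F w * pdv (pdu F) w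
              + (1 + (pdu F w)\<^sup>2) * pdv (pdv F) w = 0)"

definition harmonic_on :: "(complex \<Rightarrow> real) \<Rightarrow> complex set \<Rightarrow> bool" where
  "harmonic_on F S \<longleftrightarrow> C2_on F S \<and> (\<forall>w\<in>S. pdu (pdu F) w + pdv (pdv F) w = 0)"

definition dz :: "(complex \<Rightarrow> real) \<Rightarrow> complex \<Rightarrow> complex" where
  "dz F w = (complex_of_real (pdu F w) - \<i> * complex_of_real (pdv F w)) / 2"

definition jac :: "(complex \<Rightarrow> real) \<Rightarrow> (complex \<Rightarrow> real) \<Rightarrow> complex \<Rightarrow> real" where
  "jac X1 X2 w = pdu X1 w * pdv X2 w - pdv X1 w * pdu X2 w"

definition gauss_curv :: "(complex \<Rightarrow> real) \<Rightarrow> complex \<Rightarrow> real" where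
  "gauss_curv F w = (pdu (pdu F) w * pdv (pdv F) w - (pdv (pdu F) w)\<^sup>2)
                     / (1 + (pdu F w)\<^sup>2 + (pdv F w)\<^sup>2)\<^sup>2"

definition grad :: "(complex \<Rightarrow> real) \<Rightarrow> complex \<Rightarrow> complex" where
  "grad F w = Complex (pdu F w) (pdv F w)"

end

theory Submission
  imports Defs
begin

text \<open>
  Write \<open>\<psi> = F\<^sub>w\<close> for the complex slope of the graph. Since \<open>x\<^sub>3 = F \<circ> f\<close>, the chain rule
  expresses \<open>\<partial>x\<^sub>3/\<partial>z\<close> through \<open>\<psi>(f z)\<close>, \<open>h'\<close> and \<open>g' = h' q\<^sup>2\<close>, and conformality then forces
  \<open>\<psi>(f z) = \<plusminus> i q / (1 - |q|\<^sup>2)\<close>. Differentiating this relation determines the Hessian of \<open>F\<close>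
  at \<open>f z\<close> and gives \<open>\<K>(f z) = -4|q'|\<^sup>2 / (|h'|\<^sup>2 (1 + |q|\<^sup>2)\<^sup>4)\<close>: first where \<open>q \<noteq> 0\<close> or \<open>q\<close>
  vanishes near \<open>z\<close>, then everywhere by continuity. Hence \<open>\<K>(O) = 0\<close> means \<open>q'(0) = 0\<close>, and
  \<open>\<K>(f z)/|z|\<^sup>2 \<rightarrow> -4|q''(0)|\<^sup>2 / (|h'(0)|\<^sup>2 (1 + |q(0)|\<^sup>2)\<^sup>4)\<close>. The quadratic form
  \<open>|w|\<^sup>2 + \<langle>\<nabla>F(0), w\<rangle>\<^sup>2\<close> is the first fundamental form of the graph at \<open>O\<close>, so at \<open>w = f z\<close> it is
  asymptotic to \<open>|h'(0)|\<^sup>2 (1 + |q(0)|\<^sup>2)\<^sup>2 |z|\<^sup>2\<close>. Dividing, and transporting the limit along the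
  homeomorphism \<open>f\<close>, gives the claim.
\<close>


section \<open>Partial derivatives and limits\<close>

lemma linear_complex_decomp:
  fixes D :: "complex \<Rightarrow> 'b::real_vector"
  assumes "linear D"
  shows "D k = Re k *\<^sub>R D 1 + Im k *\<^sub>R D \<i>"
proof -
  have "k = Re k *\<^sub>R 1 + Im k *\<^sub>R \<i>" by (simp add: complex_eq_iff)
  then have "D k = D (Re k *\<^sub>R 1 + Im k *\<^sub>R \<i>)" by simp
  also have "\<dots> = Re k *\<^sub>R D 1 + Im k *\<^sub>R D \<i>"
    using assms by (simp add: linear_add linear_scale)
  finally show ?thesis .
qed

lemma has_real_derivative_along_line:
  fixes F :: "'a::real_normed_vector \<Rightarrow> real"
  assumes "(F has_derivative D) (at w)"
  shows "((\<lambda>t. F (w + t *\<^sub>R e)) has_real_derivative D e) (at 0)"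
proof -
  have "((\<lambda>t. w + t *\<^sub>R e) has_derivative (\<lambda>t. t *\<^sub>R e)) (at 0)"
    by (auto intro!: derivative_eq_intros)
  from has_derivative_compose[OF this, of F D]
  have "((\<lambda>t. F (w + t *\<^sub>R e)) has_derivative (\<lambda>t. D (t *\<^sub>R e))) (at 0)"
    using assms by simp
  moreover have "(\<lambda>t. D (t *\<^sub>R e)) = (*) (D e)"
    using has_derivative_linear[OF assms] by (simp add: linear_scale fun_eq_iff)
  ultimately show ?thesis by (simp add: has_field_derivative_def)
qed

lemma pdu_pdv_of_has_derivative:
  fixes F :: "complex \<Rightarrow> real"
  assumes "(F has_derivative D) (at w)"
  shows "pdu F w = D 1" "pdv F w = D \<i>"
proof -
  have "pdu F w = deriv (\<lambda>t. F (w + t *\<^sub>R 1)) 0"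
    unfolding pdu_def by (simp add: scaleR_conv_of_real)
  then show "pdu F w = D 1"
    using DERIV_imp_deriv[OF has_real_derivative_along_line[OF assms]] by simp
  have "pdv F w = deriv (\<lambda>t. F (w + t *\<^sub>R \<i>)) 0"
    unfolding pdv_def by (simp add: scaleR_conv_of_real mult.commute)
  then show "pdv F w = D \<i>"
    using DERIV_imp_deriv[OF has_real_derivative_along_line[OF assms]] by simp
qed

lemma has_derivative_partials:
  fixes F :: "complex \<Rightarrow> real"
  assumes "F differentiable (at w)"
  shows "(F has_derivative (\<lambda>k. Re k * pdu F w + Im k * pdv F w)) (at w)"
proof -
  obtain D where D: "(F has_derivative D) (at w)" using assms differentiable_def by blast
  have "D = (\<lambda>k. Re k * pdu F w + Im k * pdv F w)"
  proof
    fix k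
    show "D k = Re k * pdu F w + Im k * pdv F w"
      using linear_complex_decomp[OF has_derivative_linear[OF D], of k] pdu_pdv_of_has_derivative[OF D]
      by simp
  qed
  then show ?thesis using D by simp
qed

lemma pdu_pdv_eq_dz: "pdu F w = 2 * Re (dz F w)" "pdv F w = - 2 * Im (dz F w)"
  by (simp_all add: dz_def)

lemma sum_sq_partials_eq_dz: "(pdu F w)\<^sup>2 + (pdv F w)\<^sup>2 = 4 * (cmod (dz F w))\<^sup>2"
  unfolding cmod_power2 pdu_pdv_eq_dz by (simp add: power2_eq_square)

definition dz_differential :: "(complex \<Rightarrow> real) \<Rightarrow> complex \<Rightarrow> complex \<Rightarrow> complex" where
  "dz_differential F w k =
     (complex_of_real (Re k * pdu (pdu F) w + Im k * pdv (pdu F) w)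
      - \<i> * complex_of_real (Re k * pdu (pdv F) w + Im k * pdv (pdv F) w)) / 2"

lemma has_derivative_dz:
  assumes "pdu F differentiable (at w)" "pdv F differentiable (at w)"
  shows "(dz F has_derivative dz_differential F w) (at w)"
proof -
  have "dz F = (\<lambda>w. (complex_of_real (pdu F w) - \<i> * complex_of_real (pdv F w)) / 2)"
    by (simp add: dz_def fun_eq_iff)
  then show ?thesis
    unfolding dz_differential_def[abs_def]
    using bounded_linear.has_derivative[OF bounded_linear_divide[of 2]
        has_derivative_diff[OF has_derivative_of_real[OF has_derivative_partials[OF assms(1)]]
          has_derivative_mult_right[OF has_derivative_of_real[OF has_derivative_partials[OF assms(2)]]]]]
    by simp
qed

lemma isCont_eq_on_closure:
  fixes u v :: "'a::metric_space \<Rightarrow> 'b::t2_space"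
  assumes "isCont u z" "isCont v z" "z \<in> closure T" "\<And>y. y \<in> T \<Longrightarrow> u y = v y"
  shows "u z = v z"
proof -
  from assms(3) obtain x where xT: "\<And>n. x n \<in> T" and xz: "x \<longlonglongrightarrow> z"
    unfolding closure_sequential by blast
  have "(\<lambda>n. u (x n)) \<longlonglongrightarrow> u z" by (rule isCont_tendsto_compose[OF assms(1) xz])
  moreover have "(\<lambda>n. u (x n)) \<longlonglongrightarrow> v z"
    using isCont_tendsto_compose[OF assms(2) xz] by (simp add: assms(4) xT)
  ultimately show ?thesis by (rule LIMSEQ_unique)
qed

lemma tendsto_at_image_of_inj:
  fixes f :: "'a \<Rightarrow> 'a::euclidean_space"
  assumes "open S" "a \<in> S" "continuous_on S f" "inj_on f S"
    and lim: "((\<lambda>z. \<phi> (f z)) \<longlongrightarrow> L) (at a)"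
  shows "(\<phi> \<longlongrightarrow> L) (at (f a))"
proof -
  define g where "g = inv_into S f"
  have gf: "g (f z) = z" if "z \<in> S" for z
    using assms(4) that by (simp add: g_def)
  have fg: "f (g w) = w" if "w \<in> f ` S" for w
    using that by (simp add: g_def f_inv_into_f)
  have "open (f ` S)" using invariance_of_domain assms(1,3,4) by blast
  then have near: "\<forall>\<^sub>F w in at (f a). w \<in> f ` S - {f a}"
    by (rule eventually_at_in_open) (use assms(2) in auto)
  have "continuous_on (f ` S) g"
    by (rule continuous_on_inverse_open[OF assms(1,3)]) (auto simp: gf)
  then have "isCont g (f a)"
    using \<open>open (f ` S)\<close> assms(2) continuous_on_eq_continuous_at by blast
  then have "(g \<longlongrightarrow> a) (at (f a))" using gf[OF assms(2)] by (simp add: isCont_def)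
  moreover have "\<forall>\<^sub>F w in at (f a). g w \<noteq> a"
    using near by eventually_elim (use gf assms(2) fg in force)
  ultimately have "filterlim g (at a) (at (f a))" by (simp add: filterlim_at)
  then have "((\<lambda>w. \<phi> (f (g w))) \<longlongrightarrow> L) (at (f a))" by (rule filterlim_compose[OF lim])
  moreover have "\<forall>\<^sub>F w in at (f a). \<phi> (f (g w)) = \<phi> w"
    using near by eventually_elim (simp add: fg)
  ultimately show ?thesis by (rule Lim_transform_eventually)
qed

lemma tendsto_quadratic_form_ratio:
  fixes f D :: "'a::real_normed_vector \<Rightarrow> 'b::real_inner" and v :: 'b
  assumes f: "(f has_derivative D) (at 0)" "f 0 = 0" and "c \<ge> 0"
    and D: "\<And>z. (norm (D z))\<^sup>2 + (inner v (D z))\<^sup>2 = c * (norm z)\<^sup>2"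
  shows "((\<lambda>z. ((norm (f z))\<^sup>2 + (inner v (f z))\<^sup>2) / (norm z)\<^sup>2) \<longlongrightarrow> c) (at 0)"
proof -
  define N where "N x = norm (x, inner v x)" for x
  have N_sq: "(N x)\<^sup>2 = (norm x)\<^sup>2 + (inner v x)\<^sup>2" for x unfolding N_def norm_Pair by simp
  have N_le: "N x \<le> (1 + norm v) * norm x" for x
  proof -
    have "N x \<le> norm x + norm (inner v x)" unfolding N_def by (rule norm_Pair_le)
    also have "norm (inner v x) \<le> norm v * norm x" using Cauchy_Schwarz_ineq2[of v x] by simp
    finally show ?thesis by (simp add: algebra_simps)
  qed
  have N_diff: "\<bar>N x - N y\<bar> \<le> N (x - y)" for x y
  proof -
    have "(x, inner v x) - (y, inner v y) = (x - y, inner v (x - y))" by (simp add: inner_diff_right)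
    then show ?thesis unfolding N_def using norm_triangle_ineq3[of "(x, inner v x)" "(y, inner v y)"] by simp
  qed
  have N_D: "N (D z) = sqrt c * norm z" for z
  proof -
    have "N (D z) = sqrt (c * (norm z)\<^sup>2)"
      by (rule real_sqrt_unique[symmetric]) (use D N_sq in \<open>auto simp: N_def\<close>)
    then show ?thesis by (simp add: real_sqrt_mult)
  qed
  have rem: "((\<lambda>z. (1 + norm v) * (norm (f z - D z) / norm z)) \<longlongrightarrow> 0) (at 0)"
    using tendsto_mult_right_zero[of "\<lambda>z. norm (f z - D z) / norm z"] f
    unfolding has_derivative_at by simp
  have "((\<lambda>z. N (f z) / norm z - sqrt c) \<longlongrightarrow> 0) (at 0)"
  proof (rule Lim_null_comparison[OF _ rem])
    show "\<forall>\<^sub>F z in at 0. norm (N (f z) / norm z - sqrt c) \<le> (1 + norm v) * (norm (f z - D z) / norm z)"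
      unfolding eventually_at_filter
    proof (rule always_eventually, intro allI impI)
      fix z :: 'a assume "z \<noteq> 0"
      then have nz: "norm z > 0" by simp
      have "norm (N (f z) / norm z - sqrt c) = \<bar>N (f z) - N (D z)\<bar> / norm z"
        using N_D[of z] nz by (simp add: field_simps abs_divide)
      also have "\<dots> \<le> (1 + norm v) * norm (f z - D z) / norm z"
        using order_trans[OF N_diff N_le] nz by (simp add: divide_right_mono)
      finally show "norm (N (f z) / norm z - sqrt c) \<le> (1 + norm v) * (norm (f z - D z) / norm z)"
        by simp
    qed
  qed
  then have "((\<lambda>z. (N (f z) / norm z)\<^sup>2) \<longlongrightarrow> (sqrt c)\<^sup>2) (at 0)"
    by (rule tendsto_power[OF LIM_zero_cancel])
  moreover have "(\<lambda>z. (N (f z) / norm z)\<^sup>2) = (\<lambda>z. ((norm (f z))\<^sup>2 + (inner v (f z))\<^sup>2) / (norm z)\<^sup>2)"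
    by (simp add: power_divide N_sq)
  ultimately show ?thesis using \<open>c \<ge> 0\<close> by simp
qed

section \<open>The slope of a conformally parametrized graph\<close>

lemma one_add_power2_pos: "0 < 1 + (x::real)\<^sup>2"
  by (simp add: add_pos_nonneg)

lemma one_minus_mult_cnj: "1 - Q * cnj Q = complex_of_real (1 - (cmod Q)\<^sup>2)"
  using complex_norm_square[of Q] by simp

lemma one_minus_norm_sq_pos: "cmod Q < 1 \<Longrightarrow> 1 - (cmod Q)\<^sup>2 > 0"
  by (simp add: abs_square_less_1)

definition harmonic_differential :: "complex \<Rightarrow> complex \<Rightarrow> complex \<Rightarrow> complex" where
  "harmonic_differential A G k = A * k + cnj (G * k)"

lemma has_derivative_harmonic:
  assumes "(h has_field_derivative A) (at z)" "(g has_field_derivative G) (at z)"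
  shows "((\<lambda>z. h z + cnj (g z)) has_derivative harmonic_differential A G) (at z)"
  using has_derivative_add[OF has_field_derivative_imp_has_derivative[OF assms(1)]
      has_derivative_cnj[OF has_field_derivative_imp_has_derivative[OF assms(2)]]]
  by (simp add: harmonic_differential_def[abs_def])

lemma harmonic_differential_det:
  "Re (harmonic_differential A G 1) * Im (harmonic_differential A G \<i>)
     - Re (harmonic_differential A G \<i>) * Im (harmonic_differential A G 1)
   = (cmod A)\<^sup>2 - (cmod G)\<^sup>2"
  unfolding harmonic_differential_def cmod_power2 by (simp add: algebra_simps power2_eq_square)

lemma harmonic_differential_wirtinger_sq:
  fixes A G :: complex
  defines "D \<equiv> harmonic_differential A G"
  shows "((complex_of_real (Re (D 1)) - \<i> * complex_of_real (Re (D \<i>))) / 2)\<^sup>2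
         + ((complex_of_real (Im (D 1)) - \<i> * complex_of_real (Im (D \<i>))) / 2)\<^sup>2 = A * G"
  unfolding D_def harmonic_differential_def
  by (simp add: complex_eq_iff power2_eq_square field_simps)

lemma wirtinger_chain_harmonic:
  fixes A G :: complex and a b :: real
  defines "D \<equiv> harmonic_differential A G" and "\<omega> \<equiv> (complex_of_real a - \<i> * complex_of_real b) / 2"
  shows "(complex_of_real (Re (D 1) * a + Im (D 1) * b)
          - \<i> * complex_of_real (Re (D \<i>) * a + Im (D \<i>) * b)) / 2 = A * \<omega> + G * cnj \<omega>"
  unfolding D_def \<omega>_def harmonic_differential_def
  by (simp add: complex_eq_iff field_simps)

text \<open>Up to sign, the complex slope \<open>F\<^sub>w\<close> of the graph over \<open>f z\<close>, where \<open>Q = q z\<close>.\<close>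

definition graph_slope :: "complex \<Rightarrow> complex" where
  "graph_slope Q = \<i> * Q / (1 - Q * cnj Q)"

lemma norm_graph_slope:
  assumes "cmod Q < 1"
  shows "cmod (graph_slope Q) = cmod Q / (1 - (cmod Q)\<^sup>2)"
  using one_minus_norm_sq_pos[OF assms]
  unfolding graph_slope_def one_minus_mult_cnj norm_divide norm_mult norm_of_real by simp

lemma graph_slope_eq_0_iff:
  assumes "cmod Q < 1"
  shows "graph_slope Q = 0 \<longleftrightarrow> Q = 0"
  using one_minus_norm_sq_pos[OF assms]
  unfolding graph_slope_def one_minus_mult_cnj divide_eq_0_iff of_real_eq_0_iff by simp

lemma graph_slope_cases:
  fixes A Q \<omega> :: complex
  assumes "A \<noteq> 0" "cmod Q < 1"
    and conformal: "(A * \<omega> + A * Q\<^sup>2 * cnj \<omega>)\<^sup>2 = - (A * (A * Q\<^sup>2))"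
  shows "\<omega> = graph_slope Q \<or> \<omega> = - graph_slope Q"
proof -
  define u where "u = \<omega> + Q\<^sup>2 * cnj \<omega>"
  have "A\<^sup>2 * u\<^sup>2 = A\<^sup>2 * (\<i> * Q)\<^sup>2"
    using conformal unfolding u_def by (simp add: power2_eq_square algebra_simps)
  then have "u\<^sup>2 = (\<i> * Q)\<^sup>2" using assms(1) by simp
  then obtain \<epsilon> :: complex where \<epsilon>: "\<epsilon> = 1 \<or> \<epsilon> = -1" "u = \<epsilon> * (\<i> * Q)"
    by (metis power2_eq_iff mult_1 mult_minus1)
  have n: "1 - Q * cnj Q \<noteq> 0" "1 + Q * cnj Q \<noteq> 0"
    using one_minus_norm_sq_pos[OF assms(2)] unfolding complex_norm_square[symmetric]
    by (metis of_real_1 of_real_diff of_real_eq_0_iff less_irrefl,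
        metis of_real_1 of_real_add of_real_eq_0_iff add_pos_nonneg zero_le_power2 zero_less_one less_irrefl)
  have "\<omega> * ((1 - Q * cnj Q) * (1 + Q * cnj Q)) = u - cnj u * Q\<^sup>2"
    unfolding u_def by (simp add: power2_eq_square algebra_simps)
  also have "\<dots> = \<epsilon> * (\<i> * Q) * (1 + Q * cnj Q)"
    using \<epsilon>(1) unfolding \<epsilon>(2) by (elim disjE) (simp_all add: power2_eq_square algebra_simps)
  finally have "\<omega> * (1 - Q * cnj Q) = \<epsilon> * (\<i> * Q)"
    using n(2) by (simp add: mult.assoc[symmetric])
  then have "\<omega> = \<epsilon> * graph_slope Q"
    using n(1) unfolding graph_slope_def by (simp add: field_simps)
  then show ?thesis using \<epsilon>(1) by auto
qed

definition graph_slope_differential :: "complex \<Rightarrow> complex \<Rightarrow> complex \<Rightarrow> complex" where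
  "graph_slope_differential Q Q' k = \<i> * (Q' * k + Q\<^sup>2 * cnj (Q' * k)) / (1 - Q * cnj Q)\<^sup>2"

lemma has_derivative_graph_slope:
  assumes q: "(q has_field_derivative Q') (at z)" and "cmod (q z) < 1"
  shows "((\<lambda>y. graph_slope (q y)) has_derivative graph_slope_differential (q z) Q') (at z)"
proof -
  have n: "1 - q z * cnj (q z) \<noteq> 0"
    using one_minus_norm_sq_pos[OF assms(2)] unfolding one_minus_mult_cnj of_real_eq_0_iff by simp
  have q': "(q has_derivative (\<lambda>k. Q' * k)) (at z)"
    using has_field_derivative_imp_has_derivative[OF q] .
  have "((\<lambda>y. \<i> * q y / (1 - q y * cnj (q y))) has_derivative
      (\<lambda>k. (\<i> * (Q' * k) * (1 - q z * cnj (q z))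
             - \<i> * q z * (0 - (q z * cnj (Q' * k) + Q' * k * cnj (q z))))
           / ((1 - q z * cnj (q z)) * (1 - q z * cnj (q z))))) (at z)"
    by (rule has_derivative_divide'[OF has_derivative_mult_right[OF q']
          has_derivative_diff[OF has_derivative_const has_derivative_mult[OF q' has_derivative_cnj[OF q']]] n])
  moreover have "(\<lambda>k. (\<i> * (Q' * k) * (1 - q z * cnj (q z))
             - \<i> * q z * (0 - (q z * cnj (Q' * k) + Q' * k * cnj (q z))))
           / ((1 - q z * cnj (q z)) * (1 - q z * cnj (q z)))) = graph_slope_differential (q z) Q'"
    by (simp add: graph_slope_differential_def fun_eq_iff power2_eq_square algebra_simps)
  ultimately show ?thesis by (simp add: graph_slope_def[abs_def])
qed

section \<open>Curvature and metric in terms of the slope\<close>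

lemma hessian_polynomial_identity:
  fixes a b x y c d :: real
  shows "(((x*x-y*y)*d - 2*(x*y)*c - d) * (a - (a*(x*x-y*y) - b*(2*(x*y))))
          - ((x*x-y*y)*c + 2*(x*y)*d - c) * (b + (-(a*(2*(x*y))) - b*(x*x-y*y))))
       * ((-b - (b*(x*x-y*y) + a*(2*(x*y)))) * (c + ((x*x-y*y)*c + 2*(x*y)*d))
          - (a + (a*(x*x-y*y) - b*(2*(x*y)))) * (-d - ((x*x-y*y)*d - 2*(x*y)*c)))
     - ((a + (a*(x*x-y*y) - b*(2*(x*y)))) * ((x*x-y*y)*c + 2*(x*y)*d - c)
        - (-b - (b*(x*x-y*y) + a*(2*(x*y)))) * ((x*x-y*y)*d - 2*(x*y)*c - d))\<^sup>2
     = - (c*c+d*d) * (a*a+b*b) * (1-(x*x+y*y))\<^sup>2 * (1+(x*x+y*y))\<^sup>2"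
  by algebra

text \<open>The equations are the real and imaginary parts of the differentiated slope relation at
  \<open>k = 1\<close> and \<open>k = \<i>\<close>, in coordinates \<open>P = a + \<i> b\<close>, \<open>Q = x + \<i> y\<close>, \<open>Q' = c + \<i> d\<close>;
  \<open>uu, uv, vu, vv\<close> are the second partials of \<open>F\<close>.\<close>

lemma hessian_det_real:
  fixes a b x y c d s n uu uv vu vv :: real
  assumes s: "s * s = 1" and n: "n = 1 - (x*x+y*y)" "n > 0" and ab: "a*a+b*b > 0"
  defines "A1 \<equiv> a + (a*(x*x-y*y) - b*(2*(x*y)))"
    and "B1 \<equiv> b + (-(a*(2*(x*y))) - b*(x*x-y*y))"
    and "A2 \<equiv> -b - (b*(x*x-y*y) + a*(2*(x*y)))"
    and "B2 \<equiv> a - (a*(x*x-y*y) - b*(2*(x*y)))"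
    and "e1 \<equiv> (x*x-y*y)*d - 2*(x*y)*c - d"
    and "e2 \<equiv> (x*x-y*y)*c + 2*(x*y)*d - c"
    and "f1 \<equiv> c + ((x*x-y*y)*c + 2*(x*y)*d)"
    and "f2 \<equiv> -d - ((x*x-y*y)*d - 2*(x*y)*c)"
  assumes q1: "A1 * uu + B1 * uv = s * e1 * 2 / (n*n)"
    and q2: "A2 * uu + B2 * uv = s * e2 * 2 / (n*n)"
    and q3: "- (A1 * vu) - B1 * vv = s * f1 * 2 / (n*n)"
    and q4: "- (A2 * vu) - B2 * vv = s * f2 * 2 / (n*n)"
  shows "uu * vv - uv\<^sup>2 = -4 * (c*c+d*d) / ((a*a+b*b) * n^4)"
proof -
  define X where "X = 1 + (x*x+y*y)"
  define det where "det = A1*B2 - B1*A2"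
  have det: "det = (a*a+b*b) * n * X"
    unfolding det_def X_def A1_def B1_def A2_def B2_def n by algebra
  have X: "X > 0" unfolding X_def by (simp add: add_pos_nonneg)
  have nn: "n*n \<noteq> 0" using n by simp
  \<comment> \<open>Cramer's rule for the two 2x2 systems\<close>
  have uu: "uu * det = s*2*(e1*B2 - e2*B1)/(n*n)"
    using q1 q2 nn unfolding det_def by (simp add: field_simps) algebra
  have uv: "uv * det = s*2*(A1*e2 - A2*e1)/(n*n)"
    using q1 q2 nn unfolding det_def by (simp add: field_simps) algebra
  have vv: "vv * det = s*2*(A2*f1 - A1*f2)/(n*n)"
    using q3 q4 nn unfolding det_def by (simp add: field_simps) algebra
  have "(uu * vv - uv\<^sup>2) * det\<^sup>2 = (uu*det)*(vv * det) - (uv*det)\<^sup>2"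
    by (simp add: power2_eq_square algebra_simps)
  also have "\<dots> = (s * s)*4*((e1*B2 - e2*B1)*(A2*f1 - A1*f2) - (A1*e2 - A2*e1)\<^sup>2)/(n*n)\<^sup>2"
    unfolding uu uv vv using nn by (simp add: power2_eq_square field_simps)
  also have "(e1*B2 - e2*B1)*(A2*f1 - A1*f2) - (A1*e2 - A2*e1)\<^sup>2 = - (c*c+d*d) * (a*a+b*b) * n\<^sup>2 * X\<^sup>2"
    unfolding A1_def B1_def A2_def B2_def e1_def e2_def f1_def f2_def n(1) X_def
    by (rule hessian_polynomial_identity)
  finally have "(uu * vv - uv\<^sup>2) * ((a*a+b*b) * n * X)\<^sup>2
      = - 4 * (c*c+d*d) * (a*a+b*b) * n\<^sup>2 * X\<^sup>2 / (n*n)\<^sup>2"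
    using s unfolding det by simp
  moreover have cancel: "K = -4*C/(P2*n^4)"
    if "K * (P2*n*X)\<^sup>2 = - 4 * C * P2 * n\<^sup>2 * X\<^sup>2 / (n*n)\<^sup>2" "P2 > 0" "n > 0" "X > 0"
    for K C P2 n X :: real
  proof -
    have "K * (P2 * (P2 * (X * (X * (n * (n * (n * n))))))) = - (C * (P2 * (X * (X * 4))))"
      using that by (simp add: field_simps power2_eq_square)
    then have "(K * (P2*n^4) + 4*C) * (P2*X*X) = 0"
      by (simp add: algebra_simps power4_eq_xxxx)
    then have "K * (P2*n^4) + 4*C = 0" using that by simp
    then show ?thesis using that by (simp add: field_simps)
  qed
  ultimately show ?thesis using ab n(2) X by blast
qed

lemma hessian_det_from_slope_differential:
  assumes s: "s = 1 \<or> s = -1" and Q: "cmod Q < 1" and P: "P \<noteq> 0"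
    and hess: "\<And>k. dz_differential F w (harmonic_differential P (P * Q\<^sup>2) k)
                    = complex_of_real s * graph_slope_differential Q Q' k"
  shows "pdu (pdu F) w * pdv (pdv F) w - (pdv (pdu F) w)\<^sup>2
         = -4 * (cmod Q')\<^sup>2 / ((cmod P)\<^sup>2 * (1 - (cmod Q)\<^sup>2)^4)"
proof -
  obtain a b where Pab: "P = Complex a b" by (cases P)
  obtain x y where Qxy: "Q = Complex x y" by (cases Q)
  obtain c d where Q'cd: "Q' = Complex c d" by (cases Q')
  define n where "n = 1 - (x*x+y*y)"
  have cQ: "(cmod Q)\<^sup>2 = x*x+y*y" unfolding Qxy cmod_power2 by (simp add: power2_eq_square)
  have cP: "(cmod P)\<^sup>2 = a*a+b*b" unfolding Pab cmod_power2 by (simp add: power2_eq_square)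
  have cQ': "(cmod Q')\<^sup>2 = c*c+d*d" unfolding Q'cd cmod_power2 by (simp add: power2_eq_square)
  have n0: "n > 0" using one_minus_norm_sq_pos[OF Q] unfolding n_def cQ .
  have ab: "a*a+b*b > 0" using P cP by (metis zero_less_norm_iff zero_less_power)
  have den: "(1 - Q * cnj Q)\<^sup>2 = complex_of_real (n*n)"
    unfolding Qxy n_def by (simp add: power2_eq_square complex_eq_iff)
  have "s * s = 1" using s by auto
  from hess[of 1] hess[of \<i>]
  have "pdu (pdu F) w * pdv (pdv F) w - (pdv (pdu F) w)\<^sup>2 = -4 * (c*c+d*d) / ((a*a+b*b) * n^4)"
    unfolding dz_differential_def harmonic_differential_def graph_slope_differential_def
    unfolding den unfolding Pab Qxy Q'cd
    by (intro hessian_det_real[where vu = "pdu (pdv F) w", OF \<open>s * s = 1\<close> n_def n0 ab])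
      (simp_all add: complex_eq_iff power2_eq_square Re_divide_of_real Im_divide_of_real)
  then show ?thesis unfolding cP cQ cQ' n_def .
qed

lemma gauss_curv_from_slope:
  assumes s: "s = 1 \<or> s = -1" and Q: "cmod Q < 1" and P: "P \<noteq> 0"
    and slope: "dz F w = complex_of_real s * graph_slope Q"
    and hess: "\<And>k. dz_differential F w (harmonic_differential P (P * Q\<^sup>2) k)
                    = complex_of_real s * graph_slope_differential Q Q' k"
  shows "gauss_curv F w = -4 * (cmod Q')\<^sup>2 / ((cmod P)\<^sup>2 * (1 + (cmod Q)\<^sup>2)^4)"
proof -
  define r where "r = (cmod Q)\<^sup>2"
  have n: "1 - r > 0" unfolding r_def by (rule one_minus_norm_sq_pos[OF Q])
  have "r \<ge> 0" unfolding r_def by simp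
  have "cmod (dz F w) = cmod Q / (1 - r)"
    using s unfolding slope norm_mult norm_graph_slope[OF Q] r_def by auto
  then have "1 + (pdu F w)\<^sup>2 + (pdv F w)\<^sup>2 = 1 + 4 * r / (1 - r)\<^sup>2"
    unfolding add.assoc sum_sq_partials_eq_dz by (simp add: power_divide r_def)
  also have "\<dots> = (1 + r)\<^sup>2 / (1 - r)\<^sup>2"
  proof -
    have "(1 - r)\<^sup>2 \<noteq> 0" using n by simp
    then show ?thesis by (simp add: add_divide_eq_iff) (simp add: power2_eq_square algebra_simps)
  qed
  finally have metric: "1 + (pdu F w)\<^sup>2 + (pdv F w)\<^sup>2 = (1 + r)\<^sup>2 / (1 - r)\<^sup>2" .
  have cancel: "(-4 * C / (p * m^4)) / ((1 + r)\<^sup>2 / m\<^sup>2)\<^sup>2 = -4 * C / (p * (1 + r)^4)"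
    if "m > 0" "p > 0" for C p m :: real
    using that \<open>r \<ge> 0\<close> by (simp add: field_simps power2_eq_square power4_eq_xxxx)
  have "(cmod P)\<^sup>2 > 0" using P by simp
  then show ?thesis
    unfolding gauss_curv_def metric hessian_det_from_slope_differential[OF s Q P hess]
      r_def[symmetric] by (rule cancel[OF n])
qed

lemma graph_metric_from_slope:
  assumes s: "s = 1 \<or> s = -1" and Q: "cmod Q < 1"
    and slope: "dz F w = complex_of_real s * graph_slope Q"
  shows "(cmod (harmonic_differential P (P * Q\<^sup>2) k))\<^sup>2
           + (inner (grad F w) (harmonic_differential P (P * Q\<^sup>2) k))\<^sup>2
         = (cmod P * (1 + (cmod Q)\<^sup>2))\<^sup>2 * (cmod k)\<^sup>2"
proof -
  obtain a b where Pab: "P = Complex a b" by (cases P)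
  obtain x y where Qxy: "Q = Complex x y" by (cases Q)
  obtain c d where kcd: "k = Complex c d" by (cases k)
  obtain \<alpha> \<beta> where V: "harmonic_differential P (P * Q\<^sup>2) k = Complex \<alpha> \<beta>"
    by (meson complex.exhaust_sel)
  define n where "n = 1 - (x*x+y*y)"
  have cQ: "(cmod Q)\<^sup>2 = x*x+y*y" unfolding Qxy cmod_power2 by (simp add: power2_eq_square)
  have cP: "(cmod P)\<^sup>2 = a*a+b*b" unfolding Pab cmod_power2 by (simp add: power2_eq_square)
  have ck: "(cmod k)\<^sup>2 = c*c+d*d" unfolding kcd cmod_power2 by (simp add: power2_eq_square)
  have cV: "(cmod (Complex \<alpha> \<beta>))\<^sup>2 = \<alpha>*\<alpha> + \<beta>*\<beta>" unfolding cmod_power2 by (simp add: power2_eq_square)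
  have n0: "n > 0" using one_minus_norm_sq_pos[OF Q] unfolding n_def cQ .
  have "complex_of_real s * graph_slope Q = Complex (-s*y/n) (s*x/n)"
    unfolding graph_slope_def one_minus_mult_cnj cQ n_def[symmetric] unfolding Qxy
    by (simp add: complex_eq_iff Re_divide_of_real Im_divide_of_real)
  then have inner: "inner (grad F w) (Complex \<alpha> \<beta>) = 2*(-s*y/n)*\<alpha> + (-2*(s*x/n))*\<beta>"
    unfolding grad_def inner_complex_def pdu_pdv_eq_dz slope by simp
  have \<alpha>: "\<alpha> = a*c - b*d + ((a*(x*x-y*y) - b*(2*x*y))*c - (a*(2*x*y) + b*(x*x-y*y))*d)"
    using arg_cong[OF V, of Re] unfolding harmonic_differential_def Pab Qxy kcd
    by (simp add: power2_eq_square algebra_simps)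
  have \<beta>: "\<beta> = a*d + b*c - ((a*(x*x-y*y) - b*(2*x*y))*d + (a*(2*x*y) + b*(x*x-y*y))*c)"
    using arg_cong[OF V, of Im] unfolding harmonic_differential_def Pab Qxy kcd
    by (simp add: power2_eq_square algebra_simps)
  have "s * s = 1" using s by auto
  then have key: "n\<^sup>2*(\<alpha>*\<alpha> + \<beta>*\<beta>) + 4*(s * s)*(-y*\<alpha> - x*\<beta>)\<^sup>2
      = n\<^sup>2*(a*a+b*b)*(1+(x*x+y*y))\<^sup>2*(c*c+d*d)"
    unfolding \<alpha> \<beta> n_def by algebra
  have "\<alpha>*\<alpha> + \<beta>*\<beta> + (2*(-s*y/n)*\<alpha> + (-2*(s*x/n))*\<beta>)\<^sup>2
      = (n\<^sup>2*(\<alpha>*\<alpha> + \<beta>*\<beta>) + 4*(s * s)*(-y*\<alpha> - x*\<beta>)\<^sup>2)/n\<^sup>2"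
    using n0 by (simp add: field_simps power2_eq_square)
  also have "\<dots> = (a*a+b*b)*(1+(x*x+y*y))\<^sup>2*(c*c+d*d)" unfolding key using n0 by simp
  finally show ?thesis
    unfolding V cV inner power_mult_distrib cP cQ ck by simp
qed

lemma isCont_gauss_curv:
  assumes "C2_on F S" "w \<in> S"
  shows "isCont (gauss_curv F) w"
proof -
  have "isCont (pdu (pdu F)) w" "isCont (pdv (pdv F)) w" "isCont (pdv (pdu F)) w"
    using assms unfolding C2_on_def by (auto simp: continuous_on_eq_continuous_at)
  moreover have "isCont (pdu F) w" "isCont (pdv F) w"
    using assms unfolding C2_on_def by (auto intro: differentiable_imp_continuous_within)
  moreover have "(1 + (pdu F w)\<^sup>2 + (pdv F w)\<^sup>2)\<^sup>2 \<noteq> 0"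
    using add_pos_nonneg[OF one_add_power2_pos[of "pdu F w"], of "(pdv F w)\<^sup>2"] by simp
  ultimately show ?thesis
    unfolding gauss_curv_def[abs_def] by (intro continuous_intros)
qed

text \<open>The curvature \<open>\<K>(f z)\<close> in Enneper--Weierstrass data, with \<open>p = h'\<close>.\<close>

definition weierstrass_curvature :: "(complex \<Rightarrow> complex) \<Rightarrow> (complex \<Rightarrow> complex) \<Rightarrow> complex \<Rightarrow> real" where
  "weierstrass_curvature h q z =
     -4 * (cmod (deriv q z))\<^sup>2 / ((cmod (deriv h z))\<^sup>2 * (1 + (cmod (q z))\<^sup>2)^4)"

lemma weierstrass_curvature_eq_0_iff:
  assumes "deriv h z \<noteq> 0"
  shows "weierstrass_curvature h q z = 0 \<longleftrightarrow> deriv q z = 0"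
  using assms one_add_power2_pos[of "cmod (q z)"] by (simp add: weierstrass_curvature_def)

lemma isCont_weierstrass_curvature:
  assumes "h holomorphic_on S" "q holomorphic_on S" "open S" "z \<in> S" "deriv h z \<noteq> 0"
  shows "isCont (weierstrass_curvature h q) z"
proof -
  have "isCont (deriv h) z" "isCont (deriv q) z" "isCont q z"
    using assms holomorphic_deriv holomorphic_on_imp_continuous_on continuous_on_eq_continuous_at
    by metis+
  moreover have "(cmod (deriv h z))\<^sup>2 * (1 + (cmod (q z))\<^sup>2)^4 \<noteq> 0"
    using assms(5) one_add_power2_pos[of "cmod (q z)"] by simp
  ultimately show ?thesis
    unfolding weierstrass_curvature_def[abs_def] by (intro continuous_intros)
qed

lemma tendsto_weierstrass_curvature_over_norm_sq:
  assumes "h holomorphic_on S" "q holomorphic_on S" "open S" "0 \<in> S"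
    and "deriv h 0 \<noteq> 0" "deriv q 0 = 0"
  shows "((\<lambda>z. weierstrass_curvature h q z / (cmod z)\<^sup>2)
           \<longlongrightarrow> -4 * (cmod (deriv (deriv q) 0))\<^sup>2 / ((cmod (deriv h 0))\<^sup>2 * (1 + (cmod (q 0))\<^sup>2)^4))
         (at 0)"
proof -
  have "(deriv q has_field_derivative deriv (deriv q) 0) (at 0)"
    using holomorphic_derivI[OF holomorphic_deriv[OF assms(2,3)] assms(3,4)] .
  then have q': "((\<lambda>z. deriv q z / z) \<longlongrightarrow> deriv (deriv q) 0) (at 0)"
    using assms(6) unfolding DERIV_def by simp
  have "isCont (deriv h) 0" "isCont q 0"
    using assms holomorphic_deriv holomorphic_on_imp_continuous_on continuous_on_eq_continuous_at
    by metis+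
  then have "((\<lambda>z. -4 * (cmod (deriv q z / z))\<^sup>2 / ((cmod (deriv h z))\<^sup>2 * (1 + (cmod (q z))\<^sup>2)^4))
      \<longlongrightarrow> -4 * (cmod (deriv (deriv q) 0))\<^sup>2 / ((cmod (deriv h 0))\<^sup>2 * (1 + (cmod (q 0))\<^sup>2)^4)) (at 0)"
    using assms(5) one_add_power2_pos[of "cmod (q 0)"]
    by (intro tendsto_intros q') (auto simp: isCont_def)
  moreover have "\<forall>\<^sub>F z in at 0. -4 * (cmod (deriv q z / z))\<^sup>2 / ((cmod (deriv h z))\<^sup>2 * (1 + (cmod (q z))\<^sup>2)^4)
      = weierstrass_curvature h q z / (cmod z)\<^sup>2"
    by (simp add: weierstrass_curvature_def norm_divide power_divide)
  ultimately show ?thesis by (rule Lim_transform_eventually)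
qed

section \<open>Conformal harmonic parametrizations of a graph\<close>

locale conformal_graph_parametrization =
  fixes F :: "complex \<Rightarrow> real" and f h g q :: "complex \<Rightarrow> complex" and x3 :: "complex \<Rightarrow> real"
  assumes C2: "C2_on F (ball 0 1)"
    and hol_h: "h holomorphic_on ball 0 1"
    and hol_g: "g holomorphic_on ball 0 1"
    and f_decomp: "\<forall>z\<in>ball 0 1. f z = h z + cnj (g z)"
    and f_bij: "bij_betw f (ball 0 1) (ball 0 1)"
    and f_orient: "\<forall>z\<in>ball 0 1. jac (\<lambda>z. Re (f z)) (\<lambda>z. Im (f z)) z > 0"
    and x3_graph: "\<forall>z\<in>ball 0 1. x3 z = F (f z)"
    and conformal: "\<forall>z\<in>ball 0 1.
          (dz (\<lambda>z. Re (f z)) z)\<^sup>2 + (dz (\<lambda>z. Im (f z)) z)\<^sup>2 + (dz x3 z)\<^sup>2 = 0"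
    and hol_q: "q holomorphic_on ball 0 1"
    and q_range: "q ` ball 0 1 \<subseteq> ball 0 1"
    and q_sq: "\<forall>z\<in>ball 0 1. (q z)\<^sup>2 = deriv g z / deriv h z"
begin

lemma F_differentiable:
  assumes "w \<in> ball 0 1"
  shows "F differentiable (at w)" "pdu F differentiable (at w)" "pdv F differentiable (at w)"
  using C2 assms unfolding C2_on_def by auto

lemma f_in_ball: "z \<in> ball 0 1 \<Longrightarrow> f z \<in> ball 0 1"
  using f_bij unfolding bij_betw_def by auto

lemma norm_q_less_1: "z \<in> ball 0 1 \<Longrightarrow> cmod (q z) < 1"
  using q_range by (force simp: image_subset_iff)

lemma f_has_derivative:
  assumes z: "z \<in> ball 0 1"
  shows "(f has_derivative harmonic_differential (deriv h z) (deriv g z)) (at z)"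
  using has_derivative_harmonic[OF holomorphic_derivI[OF hol_h open_ball z]
      holomorphic_derivI[OF hol_g open_ball z]]
  by (rule has_derivative_transform_within_open[OF _ open_ball z]) (use f_decomp in auto)

lemma continuous_on_f: "continuous_on (ball 0 1) f"
  using f_has_derivative has_derivative_continuous
  by (metis continuous_at_imp_continuous_on)

lemma norm_deriv_g_less:
  assumes z: "z \<in> ball 0 1"
  shows "cmod (deriv g z) < cmod (deriv h z)"
proof -
  have "jac (\<lambda>z. Re (f z)) (\<lambda>z. Im (f z)) z = (cmod (deriv h z))\<^sup>2 - (cmod (deriv g z))\<^sup>2"
    unfolding jac_def pdu_pdv_of_has_derivative[OF has_derivative_Re[OF f_has_derivative[OF z]]]
      pdu_pdv_of_has_derivative[OF has_derivative_Im[OF f_has_derivative[OF z]]]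
    by (rule harmonic_differential_det)
  moreover have "jac (\<lambda>z. Re (f z)) (\<lambda>z. Im (f z)) z > 0" using f_orient z by blast
  ultimately have "(cmod (deriv g z))\<^sup>2 < (cmod (deriv h z))\<^sup>2" by linarith
  then show ?thesis using power2_less_imp_less by fastforce
qed

lemma deriv_h_nonzero: "z \<in> ball 0 1 \<Longrightarrow> deriv h z \<noteq> 0"
  using norm_deriv_g_less by fastforce

lemma deriv_g_eq: "z \<in> ball 0 1 \<Longrightarrow> deriv g z = deriv h z * (q z)\<^sup>2"
  using q_sq deriv_h_nonzero by simp

lemma x3_has_derivative:
  assumes z: "z \<in> ball 0 1"
  shows "(x3 has_derivative (\<lambda>k. Re (harmonic_differential (deriv h z) (deriv g z) k) * pdu F (f z)
           + Im (harmonic_differential (deriv h z) (deriv g z) k) * pdv F (f z))) (at z)"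
  using has_derivative_compose[OF f_has_derivative[OF z]
      has_derivative_partials[OF F_differentiable(1)[OF f_in_ball[OF z]]]]
  by (rule has_derivative_transform_within_open[OF _ open_ball z]) (use x3_graph in auto)

lemma dz_F_eq_graph_slope:
  assumes z: "z \<in> ball 0 1"
  obtains s :: real where "s = 1 \<or> s = -1" "dz F (f z) = complex_of_real s * graph_slope (q z)"
proof -
  define A where "A = deriv h z"
  have dz_x3: "dz x3 z = A * dz F (f z) + deriv g z * cnj (dz F (f z))"
    unfolding dz_def[of x3] pdu_pdv_of_has_derivative[OF x3_has_derivative[OF z]]
    using wirtinger_chain_harmonic[of "deriv h z" "deriv g z" "pdu F (f z)" "pdv F (f z)"]
    by (simp add: dz_def A_def)
  have "(dz (\<lambda>z. Re (f z)) z)\<^sup>2 + (dz (\<lambda>z. Im (f z)) z)\<^sup>2 = A * deriv g z"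
    unfolding dz_def pdu_pdv_of_has_derivative[OF has_derivative_Re[OF f_has_derivative[OF z]]]
      pdu_pdv_of_has_derivative[OF has_derivative_Im[OF f_has_derivative[OF z]]] A_def
    by (rule harmonic_differential_wirtinger_sq)
  then have "(dz x3 z)\<^sup>2 = - (A * (A * (q z)\<^sup>2))"
    using conformal z deriv_g_eq[OF z] unfolding A_def by (metis add_eq_0_iff)
  then have "dz F (f z) = graph_slope (q z) \<or> dz F (f z) = - graph_slope (q z)"
    using graph_slope_cases[OF deriv_h_nonzero[OF z] norm_q_less_1[OF z]] dz_x3
    unfolding A_def deriv_g_eq[OF z] by (simp add: mult.assoc)
  then show ?thesis using that by (metis mult_1 mult_minus1 of_real_1 of_real_minus)
qed

lemma has_derivative_dz_F_f:
  assumes z: "z \<in> ball 0 1"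
  shows "((\<lambda>y. dz F (f y)) has_derivative
           (\<lambda>k. dz_differential F (f z) (harmonic_differential (deriv h z) (deriv g z) k))) (at z)"
  using has_derivative_compose[OF f_has_derivative[OF z]
      has_derivative_dz[OF F_differentiable(2,3)[OF f_in_ball[OF z]]]] .

lemma has_derivative_graph_slope_q:
  assumes z: "z \<in> ball 0 1"
  shows "((\<lambda>y. graph_slope (q y)) has_derivative graph_slope_differential (q z) (deriv q z)) (at z)"
  using has_derivative_graph_slope[OF holomorphic_derivI[OF hol_q open_ball z] norm_q_less_1[OF z]] .

lemma dz_F_sq: "y \<in> ball 0 1 \<Longrightarrow> dz F (f y) * dz F (f y) = graph_slope (q y) * graph_slope (q y)"
  by (erule dz_F_eq_graph_slope) auto

text \<open>Squaring removes the unknown sign, so both sides can be differentiated; the sign is then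
  recovered from the undifferentiated relation because the slope does not vanish.\<close>

lemma dz_differential_eq_if_q_nonzero:
  assumes z: "z \<in> ball 0 1" and "q z \<noteq> 0"
  obtains s :: real where "s = 1 \<or> s = -1" "dz F (f z) = complex_of_real s * graph_slope (q z)"
    "\<And>k. dz_differential F (f z) (harmonic_differential (deriv h z) (deriv g z) k)
           = complex_of_real s * graph_slope_differential (q z) (deriv q z) k"
proof -
  obtain s :: real where s: "s = 1 \<or> s = -1" "dz F (f z) = complex_of_real s * graph_slope (q z)"
    using dz_F_eq_graph_slope[OF z] by blast
  let ?d\<Psi> = "\<lambda>k. dz_differential F (f z) (harmonic_differential (deriv h z) (deriv g z) k)"
  let ?dB = "graph_slope_differential (q z) (deriv q z)"
  have "((\<lambda>y. graph_slope (q y) * graph_slope (q y)) has_derivative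
      (\<lambda>k. dz F (f z) * ?d\<Psi> k + ?d\<Psi> k * dz F (f z))) (at z)"
    by (rule has_derivative_transform_within_open[OF
          has_derivative_mult[OF has_derivative_dz_F_f[OF z] has_derivative_dz_F_f[OF z]] open_ball z])
      (simp add: dz_F_sq)
  from has_derivative_unique[OF this
      has_derivative_mult[OF has_derivative_graph_slope_q[OF z] has_derivative_graph_slope_q[OF z]]]
  have "dz F (f z) * ?d\<Psi> k + ?d\<Psi> k * dz F (f z)
      = graph_slope (q z) * ?dB k + ?dB k * graph_slope (q z)" for k
    unfolding fun_eq_iff by blast
  then have "graph_slope (q z) * (complex_of_real s * ?d\<Psi> k - ?dB k) = 0" for k
    unfolding s(2) by (simp add: algebra_simps)
  moreover have "graph_slope (q z) \<noteq> 0"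
    using \<open>q z \<noteq> 0\<close> graph_slope_eq_0_iff[OF norm_q_less_1[OF z]] by blast
  ultimately have s_d\<Psi>: "complex_of_real s * ?d\<Psi> k = ?dB k" for k by simp
  have "?d\<Psi> k = complex_of_real s * ?dB k" for k
  proof -
    have "complex_of_real s * complex_of_real s = 1" using s(1) by auto
    then have "?d\<Psi> k = complex_of_real s * (complex_of_real s * ?d\<Psi> k)"
      by (simp add: mult.assoc[symmetric])
    then show ?thesis unfolding s_d\<Psi> .
  qed
  then show thesis using that s by blast
qed

lemma dz_differential_eq_if_q_locally_zero:
  assumes z: "z \<in> ball 0 1" and "z \<in> interior {y. q y = 0}"
  obtains s :: real where "s = 1 \<or> s = -1" "dz F (f z) = complex_of_real s * graph_slope (q z)"
    "\<And>k. dz_differential F (f z) (harmonic_differential (deriv h z) (deriv g z) k)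
           = complex_of_real s * graph_slope_differential (q z) (deriv q z) k"
proof -
  define U where "U = ball 0 1 \<inter> interior {y. q y = 0}"
  have U: "open U" "z \<in> U" using z assms(2) by (auto simp: U_def)
  have q0: "q y = 0" if "y \<in> U" for y using that interior_subset by (auto simp: U_def)
  have "((\<lambda>y. dz F (f y)) has_derivative (\<lambda>k. 0)) (at z)"
  proof (rule has_derivative_transform_within_open[OF has_derivative_const[of 0] U])
    fix y assume "y \<in> U"
    then show "0 = dz F (f y)" using dz_F_sq[of y] q0[of y] by (simp add: U_def graph_slope_def)
  qed
  from has_derivative_unique[OF has_derivative_dz_F_f[OF z] this]
  have d\<Psi>: "dz_differential F (f z) (harmonic_differential (deriv h z) (deriv g z) k) = 0" for k
    unfolding fun_eq_iff by blast
  have "(q has_field_derivative 0) (at z)"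
    by (rule has_field_derivative_transform_within_open[OF DERIV_const[of 0] U]) (use q0 in auto)
  then have "deriv q z = 0" by (rule DERIV_imp_deriv)
  moreover have "dz F (f z) = 0"
    using dz_F_sq[OF z] q0[OF U(2)] by (simp add: graph_slope_def)
  ultimately show thesis
    using that[of 1] d\<Psi> q0[OF U(2)] by (simp add: graph_slope_def graph_slope_differential_def)
qed

lemma gauss_curv_f_eq:
  assumes z: "z \<in> ball 0 1"
  shows "gauss_curv F (f z) = weierstrass_curvature h q z"
proof -
  have eq: "gauss_curv F (f y) = weierstrass_curvature h q y"
    if y: "y \<in> ball 0 1" "q y \<noteq> 0 \<or> y \<in> interior {y. q y = 0}" for y
  proof -
    obtain s where s: "s = 1 \<or> s = -1" "dz F (f y) = complex_of_real s * graph_slope (q y)"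
      "\<And>k. dz_differential F (f y) (harmonic_differential (deriv h y) (deriv g y) k)
             = complex_of_real s * graph_slope_differential (q y) (deriv q y) k"
      using y(2) dz_differential_eq_if_q_nonzero[OF y(1)] dz_differential_eq_if_q_locally_zero[OF y(1)]
      by blast
    show ?thesis
      using gauss_curv_from_slope[OF s(1) norm_q_less_1[OF y(1)] deriv_h_nonzero[OF y(1)] s(2)] s(3)
      unfolding deriv_g_eq[OF y(1)] weierstrass_curvature_def by blast
  qed
  show ?thesis
  proof (cases "z \<in> interior {y. q y = 0}")
    case True
    then show ?thesis using eq z by blast
  next
    case False
    then have "z \<in> closure {y. q y \<noteq> 0}"
      using interior_complement[of "{y. q y \<noteq> 0}"] by (simp add: Compl_eq Collect_neg_eq[symmetric])
    then have "z \<in> closure (ball 0 1 \<inter> {y. q y \<noteq> 0})"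
      using open_Int_closure_subset[OF open_ball] z by blast
    moreover have "isCont (\<lambda>y. gauss_curv F (f y)) z"
      using continuous_on_f z isCont_gauss_curv[OF C2 f_in_ball[OF z]]
      by (metis continuous_on_eq_continuous_at open_ball isCont_o2)
    ultimately show ?thesis
      using isCont_eq_on_closure[OF _ isCont_weierstrass_curvature[OF hol_h hol_q open_ball z
            deriv_h_nonzero[OF z]]] eq by blast
  qed
qed

lemma metric_ratio_tendsto:
  assumes f0: "f 0 = 0"
  shows "((\<lambda>z. ((cmod (f z))\<^sup>2 + (inner (grad F 0) (f z))\<^sup>2) / (cmod z)\<^sup>2)
           \<longlongrightarrow> (cmod (deriv h 0) * (1 + (cmod (q 0))\<^sup>2))\<^sup>2) (at 0)"
proof -
  have 0: "(0::complex) \<in> ball 0 1" by simp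
  obtain s where s: "s = 1 \<or> s = -1" "dz F 0 = complex_of_real s * graph_slope (q 0)"
    using dz_F_eq_graph_slope[OF 0] f0 by metis
  show ?thesis
    using f_has_derivative[OF 0] f0 graph_metric_from_slope[OF s(1) norm_q_less_1[OF 0] s(2)]
    unfolding deriv_g_eq[OF 0] by (intro tendsto_quadratic_form_ratio) auto
qed


lemma deriv_q_0_eq_0:
  assumes "f 0 = 0" "gauss_curv F 0 = 0"
  shows "deriv q 0 = 0"
  using gauss_curv_f_eq[of 0] assms weierstrass_curvature_eq_0_iff[OF deriv_h_nonzero[of 0]] by simp

lemma tendsto_gauss_curv_ratio:
  assumes f0: "f 0 = 0" and K0: "gauss_curv F 0 = 0"
  shows "((\<lambda>w. gauss_curv F w / ((cmod w)\<^sup>2 + (inner (grad F 0) w)\<^sup>2))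
           \<longlongrightarrow> (-4 * (cmod (deriv (deriv q) 0))\<^sup>2 / ((cmod (deriv h 0))\<^sup>2 * (1 + (cmod (q 0))\<^sup>2)^4))
               / (cmod (deriv h 0) * (1 + (cmod (q 0))\<^sup>2))\<^sup>2) (at 0)"
proof -
  have 0: "(0::complex) \<in> ball 0 1" by simp
  have "(cmod (deriv h 0) * (1 + (cmod (q 0))\<^sup>2))\<^sup>2 \<noteq> 0"
    using deriv_h_nonzero[OF 0] one_add_power2_pos[of "cmod (q 0)"] by simp
  with tendsto_weierstrass_curvature_over_norm_sq[OF hol_h hol_q open_ball 0 deriv_h_nonzero[OF 0]
      deriv_q_0_eq_0[OF f0 K0]] metric_ratio_tendsto[OF f0]
  have "((\<lambda>z. (weierstrass_curvature h q z / (cmod z)\<^sup>2)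
                / (((cmod (f z))\<^sup>2 + (inner (grad F 0) (f z))\<^sup>2) / (cmod z)\<^sup>2))
         \<longlongrightarrow> (-4 * (cmod (deriv (deriv q) 0))\<^sup>2 / ((cmod (deriv h 0))\<^sup>2 * (1 + (cmod (q 0))\<^sup>2)^4))
             / (cmod (deriv h 0) * (1 + (cmod (q 0))\<^sup>2))\<^sup>2) (at 0)"
    by (rule tendsto_divide)
  moreover have "\<forall>\<^sub>F z in at 0. (weierstrass_curvature h q z / (cmod z)\<^sup>2)
                  / (((cmod (f z))\<^sup>2 + (inner (grad F 0) (f z))\<^sup>2) / (cmod z)\<^sup>2)
      = gauss_curv F (f z) / ((cmod (f z))\<^sup>2 + (inner (grad F 0) (f z))\<^sup>2)"
    using eventually_at_in_open[OF open_ball 0] by eventually_elim (simp add: gauss_curv_f_eq)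
  ultimately have "((\<lambda>z. gauss_curv F (f z) / ((cmod (f z))\<^sup>2 + (inner (grad F 0) (f z))\<^sup>2))
      \<longlongrightarrow> (-4 * (cmod (deriv (deriv q) 0))\<^sup>2 / ((cmod (deriv h 0))\<^sup>2 * (1 + (cmod (q 0))\<^sup>2)^4))
          / (cmod (deriv h 0) * (1 + (cmod (q 0))\<^sup>2))\<^sup>2) (at 0)"
    by (rule Lim_transform_eventually)
  then show ?thesis
    using tendsto_at_image_of_inj[OF open_ball 0 continuous_on_f, of
        "\<lambda>w. gauss_curv F w / ((cmod w)\<^sup>2 + (inner (grad F 0) w)\<^sup>2)"] f_bij f0
    by (simp add: bij_betw_def)
qed
end

theorem mainTheorem2:
  fixes F :: "complex \<Rightarrow> real"
    and f h g p q :: "complex \<Rightarrow> complex"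
    and x3 :: "complex \<Rightarrow> real"
  assumes minimal: "minimal_graph_on F (ball 0 1)"
    and F0: "F 0 = 0"
    and hol_h: "h holomorphic_on ball 0 1"
    and hol_g: "g holomorphic_on ball 0 1"
    and f_decomp: "\<forall>z\<in>ball 0 1. f z = h z + cnj (g z)"
    and f_bij: "bij_betw f (ball 0 1) (ball 0 1)"
    and f_orient: "\<forall>z\<in>ball 0 1. jac (\<lambda>z. Re (f z)) (\<lambda>z. Im (f z)) z > 0"
    and f0: "f 0 = 0"
    and x3_graph: "\<forall>z\<in>ball 0 1. x3 z = F (f z)"
    and x3_harm: "harmonic_on x3 (ball 0 1)"
    and conformal: "\<forall>z\<in>ball 0 1.
          (dz (\<lambda>z. Re (f z)) z)\<^sup>2 + (dz (\<lambda>z. Im (f z)) z)\<^sup>2 + (dz x3 z)\<^sup>2 = 0"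
    and p_def: "\<forall>z\<in>ball 0 1. p z = deriv h z"
    and hol_q: "q holomorphic_on ball 0 1"
    and q_range: "q ` ball 0 1 \<subseteq> ball 0 1"
    and q_sq: "\<forall>z\<in>ball 0 1. (q z)\<^sup>2 = deriv g z / deriv h z"
    and K0: "gauss_curv F 0 = 0"
  shows "\<exists>L. ((\<lambda>w. gauss_curv F w / ((cmod w)\<^sup>2 + (inner (grad F 0) w)\<^sup>2)) \<longlongrightarrow> L) (at 0)
            \<and> \<bar>L\<bar> = 4 * (cmod (deriv (deriv q) 0))\<^sup>2
                      / ((cmod (p 0))^4 * (1 + (cmod (q 0))\<^sup>2)^6)"
proof -
  interpret conformal_graph_parametrization F f h g q x3
    using minimal hol_h hol_g f_decomp f_bij f_orient x3_graph conformal hol_q q_range q_sq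
    by unfold_locales (simp_all add: minimal_graph_on_def)
  define a where "a = cmod (deriv h 0)"
  define X where "X = 1 + (cmod (q 0))\<^sup>2"
  have "a > 0" using deriv_h_nonzero[of 0] by (simp add: a_def)
  moreover have "X > 0" unfolding X_def by (rule one_add_power2_pos)
  ultimately have "\<bar>(-4 * (cmod (deriv (deriv q) 0))\<^sup>2 / (a\<^sup>2 * X^4)) / (a * X)\<^sup>2\<bar>
      = 4 * (cmod (deriv (deriv q) 0))\<^sup>2 / (a^4 * X^6)"
    by (simp add: abs_divide abs_mult field_simps power2_eq_square power4_eq_xxxx) (simp add: power_def)
  then show ?thesis
    using tendsto_gauss_curv_ratio[OF f0 K0] p_def unfolding a_def X_def by auto
qed

end
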